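(* Let $\mathcal{H}_A,\mathcal{H}_B,\mathcal{H}_C$ be finite-dimensional Hilbert spaces. For any strictly positive definite density matrix $\rho_{AB}$ on $\mathcal{H}_A\otimes\mathcal{H}_B$ and any strictly positive definite density matrix $\sigma_{BC}$ on $\mathcal{H}_B\otimes\mathcal{H}_C$, $$\rho_A^{-1}\otimes \sigma_{BC} \;\leq\; \rho_{AB}^{-1}\otimes \sigma_C$$ as operators on $\mathcal{H}_A\otimes\mathcal{H}_B\otimes\mathcal{H}_C$.
   Context: A density matrix is a positive semidefinite operator of trace one. Marginals are partial traces: $\rho_A=\mathrm{Tr}_B\,\rho_{AB}$, $\sigma_C=\mathrm{Tr}_B\,\sigma_{BC}$. The tensor factors are ordered as $\mathcal{H}_A\otimes\mathcal{H}_B\otimes\mathcal{H}_C$ (so $\rho_A^{-1}\otimes\sigma_{BC}$ acts as $\rho_A^{-1}$ on $A$ and $\sigma_{BC}$ on $BC$, and $\rho_{AB}^{-1}\otimes\sigma_C$ acts as $\rho_{AB}^{-1}$ on $AB$ and $\sigma_C$ on $C$). For Hermitian operators, $X\leq Y$ means $Y-X$ is positive semidefinite. *)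

theory Defs
  imports "HOL-Analysis.Analysis"
begin

text \<open>Operators on a finite-dimensional Hilbert space with orthonormal basis indexed by
  a finite type 'i are represented as complex matrices of type complex^'i^'i.
  The composite system AB has index type 'a \<times> 'b, and ABC has index type 'a \<times> 'b \<times> 'c.\<close>

definition hermitian :: "complex^('i::finite)^'i \<Rightarrow> bool" where
  "hermitian M \<longleftrightarrow> (\<forall>i j. M $ i $ j = cnj (M $ j $ i))"

definition qform :: "complex^('i::finite)^'i \<Rightarrow> ('i \<Rightarrow> complex) \<Rightarrow> complex" where
  "qform M x = (\<Sum>i\<in>UNIV. \<Sum>j\<in>UNIV. cnj (x i) * M $ i $ j * x j)"

definition psd :: "complex^('i::finite)^'i \<Rightarrow> bool" where
  "psd M \<longleftrightarrow> hermitian M \<and> (\<forall>x. 0 \<le> Re (qform M x))"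

definition pd :: "complex^('i::finite)^'i \<Rightarrow> bool" where
  "pd M \<longleftrightarrow> hermitian M \<and> (\<forall>x. x \<noteq> (\<lambda>_. 0) \<longrightarrow> 0 < Re (qform M x))"

definition density :: "complex^('i::finite)^'i \<Rightarrow> bool" where
  "density M \<longleftrightarrow> psd M \<and> trace M = 1"

definition loewner_le :: "complex^('i::finite)^'i \<Rightarrow> complex^'i^'i \<Rightarrow> bool" where
  "loewner_le X Y \<longleftrightarrow> psd (Y - X)"

definition ptrace2 :: "complex^('a::finite \<times> 'b::finite)^('a \<times> 'b) \<Rightarrow> complex^'a^'a" where
  "ptrace2 M = (\<chi> a. \<chi> a'. \<Sum>b\<in>UNIV. M $ (a, b) $ (a', b))"

definition ptrace1 :: "complex^('a::finite \<times> 'b::finite)^('a \<times> 'b) \<Rightarrow> complex^'b^'b" where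
  "ptrace1 M = (\<chi> b. \<chi> b'. \<Sum>a\<in>UNIV. M $ (a, b) $ (a, b'))"

definition kron :: "complex^('a::finite)^'a \<Rightarrow> complex^('b::finite)^'b \<Rightarrow> complex^('a \<times> 'b)^('a \<times> 'b)" where
  "kron X Y = (\<chi> p. \<chi> q. X $ fst p $ fst q * Y $ snd p $ snd q)"

text \<open>Canonical identification (H_A \<otimes> H_B) \<otimes> H_C = H_A \<otimes> (H_B \<otimes> H_C).\<close>
definition reassoc :: "complex^(('a::finite \<times> 'b::finite) \<times> 'c::finite)^(('a \<times> 'b) \<times> 'c) \<Rightarrow> complex^('a \<times> 'b \<times> 'c)^('a \<times> 'b \<times> 'c)" where
  "reassoc M = (\<chi> p. \<chi> q. M $ ((fst p, fst (snd p)), snd (snd p)) $ ((fst q, fst (snd q)), snd (snd q)))"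

end

theory Submission
  imports Defs
begin

text \<open>
  Write \<open>\<sigma>\<^sub>B\<^sub>C = \<Sigma>\<^sub>k g\<^sub>k g\<^sub>k\<^sup>*\<close> (a Gram decomposition, obtained by repeatedly splitting off a Schur
  complement). Both sides are linear in \<open>\<sigma>\<^sub>B\<^sub>C\<close>, so it suffices to treat a rank-one \<open>g g\<^sup>*\<close>: at a
  vector \<open>v\<close> the two quadratic forms are \<open>\<langle>u, \<rho>\<^sub>A\<^sup>-\<^sup>1 u\<rangle>\<close> and \<open>\<Sigma>\<^sub>\<beta> \<langle>w\<^sub>\<beta>, \<rho>\<^sub>A\<^sub>B\<^sup>-\<^sup>1 w\<^sub>\<beta>\<rangle>\<close>, where
  \<open>w\<^sub>\<beta>(a,b) = \<Sigma>\<^sub>c g(\<beta>,c)\<^sup>* v(a,b,c)\<close> and \<open>u(a) = \<Sigma>\<^sub>\<beta> w\<^sub>\<beta>(a,\<beta>)\<close>. Put \<open>y = \<rho>\<^sub>A\<^sup>-\<^sup>1 u\<close>,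
  \<open>m\<^sub>\<beta> = \<rho>\<^sub>A\<^sub>B\<^sup>-\<^sup>1 w\<^sub>\<beta>\<close> and \<open>t\<^sub>\<beta> = y \<otimes> e\<^sub>\<beta>\<close>. Positivity of \<open>\<rho>\<^sub>A\<^sub>B\<close> at \<open>m\<^sub>\<beta> - t\<^sub>\<beta>\<close> gives
  \<open>2 Re \<langle>t\<^sub>\<beta>, \<rho>\<^sub>A\<^sub>B m\<^sub>\<beta>\<rangle> \<le> \<langle>m\<^sub>\<beta>, \<rho>\<^sub>A\<^sub>B m\<^sub>\<beta>\<rangle> + \<langle>t\<^sub>\<beta>, \<rho>\<^sub>A\<^sub>B t\<^sub>\<beta>\<rangle>\<close>, and after summing over \<open>\<beta>\<close> both
  \<open>\<Sigma>\<^sub>\<beta> \<langle>t\<^sub>\<beta>, \<rho>\<^sub>A\<^sub>B m\<^sub>\<beta>\<rangle>\<close> and \<open>\<Sigma>\<^sub>\<beta> \<langle>t\<^sub>\<beta>, \<rho>\<^sub>A\<^sub>B t\<^sub>\<beta>\<rangle>\<close> equal \<open>\<langle>y, \<rho>\<^sub>A y\<rangle> = \<langle>u, \<rho>\<^sub>A\<^sup>-\<^sup>1 u\<rangle>\<close>.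
\<close>

lemma hermitian_cnj_entry: "hermitian H \<Longrightarrow> cnj (H $ i $ j) = H $ j $ i"
  unfolding hermitian_def by (metis complex_cnj_cnj)

lemma hermitianI: "(\<And>i j. cnj (H $ j $ i) = H $ i $ j) \<Longrightarrow> hermitian H"
  unfolding hermitian_def by (metis complex_cnj_cnj)

definition matvec :: "complex^('i::finite)^'i \<Rightarrow> ('i \<Rightarrow> complex) \<Rightarrow> 'i \<Rightarrow> complex" where
  "matvec H x = (\<lambda>i. \<Sum>j\<in>UNIV. H $ i $ j * x j)"

definition sesq :: "complex^('i::finite)^'i \<Rightarrow> ('i \<Rightarrow> complex) \<Rightarrow> ('i \<Rightarrow> complex) \<Rightarrow> complex" where
  "sesq H x z = (\<Sum>i\<in>UNIV. cnj (x i) * matvec H z i)"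

definition std_basis :: "'i \<Rightarrow> 'i \<Rightarrow> complex" where
  "std_basis k = (\<lambda>i. if i = k then 1 else 0)"

lemma qform_eq_sesq: "qform H x = sesq H x x"
  unfolding qform_def sesq_def matvec_def by (simp add: sum_distrib_left mult.assoc)

lemma qform_diff: "qform (A - B) x = qform A x - qform B x"
  unfolding qform_def by (simp add: ring_distribs sum_subtractf)

lemma matvec_add: "matvec H (\<lambda>i. x i + y i) = (\<lambda>i. matvec H x i + matvec H y i)"
  unfolding matvec_def by (simp add: sum.distrib ring_distribs)

lemma matvec_diff: "matvec H (\<lambda>i. x i - y i) = (\<lambda>i. matvec H x i - matvec H y i)"
  unfolding matvec_def by (simp add: sum_subtractf ring_distribs)

lemma matvec_scale: "matvec H (\<lambda>i. a * x i) = (\<lambda>i. a * matvec H x i)"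
  unfolding matvec_def by (simp add: sum_distrib_left mult.left_commute)

lemma matvec_sum: "matvec H (\<lambda>i. \<Sum>c\<in>C. f c i) = (\<lambda>i. \<Sum>c\<in>C. matvec H (f c) i)"
  unfolding matvec_def by (rule ext) (simp add: sum_distrib_left, rule sum.swap)

lemma matvec_mult: "matvec (A ** B) x = matvec A (matvec B x)"
proof (rule ext)
  fix i
  have "matvec (A ** B) x i = (\<Sum>j\<in>UNIV. \<Sum>k\<in>UNIV. A $ i $ k * B $ k $ j * x j)"
    unfolding matvec_def matrix_matrix_mult_def by (simp add: sum_distrib_right)
  also have "\<dots> = matvec A (matvec B x) i"
    unfolding matvec_def by (subst sum.swap) (simp add: sum_distrib_left mult.assoc)
  finally show "matvec (A ** B) x i = matvec A (matvec B x) i" .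
qed

lemma matvec_mat_1: "matvec (mat 1) x = x"
  unfolding matvec_def mat_def by (simp add: if_distrib if_distribR cong: if_cong)

lemma matvec_std_basis: "matvec H (std_basis j) i = H $ i $ j"
  unfolding matvec_def std_basis_def by (simp add: if_distrib if_distribR cong: if_cong)

lemma sesq_add_left: "sesq H (\<lambda>i. x i + y i) z = sesq H x z + sesq H y z"
  unfolding sesq_def by (simp add: sum.distrib ring_distribs)

lemma sesq_add_right: "sesq H x (\<lambda>i. z i + y i) = sesq H x z + sesq H x y"
  unfolding sesq_def by (simp add: matvec_add sum.distrib ring_distribs)

lemma sesq_diff_left: "sesq H (\<lambda>i. x i - y i) z = sesq H x z - sesq H y z"
  unfolding sesq_def by (simp add: sum_subtractf ring_distribs)

lemma sesq_diff_right: "sesq H x (\<lambda>i. z i - y i) = sesq H x z - sesq H x y"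
  unfolding sesq_def by (simp add: matvec_diff sum_subtractf ring_distribs)

lemma sesq_scale_left: "sesq H (\<lambda>i. a * x i) z = cnj a * sesq H x z"
  unfolding sesq_def by (simp add: sum_distrib_left mult.assoc)

lemma sesq_scale_right: "sesq H x (\<lambda>i. a * z i) = a * sesq H x z"
  unfolding sesq_def by (simp add: matvec_scale sum_distrib_left mult.left_commute)

lemma sesq_sum_left: "sesq H (\<lambda>i. \<Sum>c\<in>C. f c i) z = (\<Sum>c\<in>C. sesq H (f c) z)"
  unfolding sesq_def by (simp add: cnj_sum sum_distrib_right) (rule sum.swap)

lemma sesq_sum_right: "sesq H x (\<lambda>i. \<Sum>c\<in>C. f c i) = (\<Sum>c\<in>C. sesq H x (f c))"
  unfolding sesq_def matvec_sum by (simp add: sum_distrib_left, rule sum.swap)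

lemma sesq_std_basis_left: "sesq H (std_basis i) z = matvec H z i"
  unfolding sesq_def std_basis_def by (simp add: if_distrib if_distribR cong: if_cong)

lemma sesq_std_basis: "sesq H (std_basis i) (std_basis j) = H $ i $ j"
  by (simp add: sesq_std_basis_left matvec_std_basis)

lemma sesq_rank_one_diff:
  fixes H :: "complex^('i::finite)^'i"
  shows "sesq (\<chi> i j. H $ i $ j - a i * b j) x z
     = sesq H x z - (\<Sum>i\<in>UNIV. cnj (x i) * a i) * (\<Sum>j\<in>UNIV. b j * z j)"
  unfolding sesq_def matvec_def
  by (simp add: ring_distribs sum_subtractf sum_distrib_left sum_distrib_right
      mult.assoc mult.left_commute) (rule sum.swap)

lemma sesq_hermitian_adjoint:
  assumes "hermitian H"
  shows "(\<Sum>i\<in>UNIV. cnj (matvec H y i) * z i) = sesq H y z"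
proof -
  have "(\<Sum>i\<in>UNIV. cnj (matvec H y i) * z i)
      = (\<Sum>i\<in>UNIV. \<Sum>j\<in>UNIV. H $ j $ i * cnj (y j) * z i)"
    unfolding matvec_def
    by (simp add: sum_distrib_left sum_distrib_right hermitian_cnj_entry[OF assms] mult.commute mult.left_commute)
  also have "\<dots> = sesq H y z"
    unfolding sesq_def matvec_def
    by (subst sum.swap) (simp add: sum_distrib_left mult.commute mult.left_commute)
  finally show ?thesis .
qed

lemma sesq_hermitian_swap:
  assumes "hermitian H"
  shows "sesq H z y = cnj (sesq H y z)"
proof -
  have "cnj (sesq H y z) = (\<Sum>i\<in>UNIV. cnj (matvec H z i) * y i)"
    unfolding sesq_def by (simp add: mult.commute)
  then show ?thesis using sesq_hermitian_adjoint[OF assms] by simp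
qed

lemma psd_sesq_Re_le:
  assumes "psd H"
  shows "2 * Re (sesq H x z) \<le> Re (qform H x) + Re (qform H z)"
proof -
  have "0 \<le> Re (qform H (\<lambda>i. x i - z i))"
    using assms unfolding psd_def by blast
  also have "qform H (\<lambda>i. x i - z i) = qform H x - sesq H x z - sesq H z x + qform H z"
    unfolding qform_eq_sesq sesq_diff_left sesq_diff_right by simp
  finally show ?thesis
    using sesq_hermitian_swap[of H x z] assms unfolding psd_def by simp
qed

lemma qform_right_inverse:
  assumes "hermitian A" and "A ** P = mat 1"
  shows "qform P u = qform A (matvec P u)"
proof -
  have "u = matvec A (matvec P u)"
    using assms(2) by (simp add: matvec_mult[symmetric] matvec_mat_1)
  then have "qform P u = (\<Sum>i\<in>UNIV. cnj (matvec A (matvec P u) i) * matvec P u i)"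
    unfolding qform_eq_sesq sesq_def by metis
  then show ?thesis
    unfolding qform_eq_sesq sesq_hermitian_adjoint[OF assms(1)] .
qed

lemma pd_matrix_inv:
  fixes H :: "complex^('i::finite)^'i"
  assumes "pd H"
  shows "H ** matrix_inv H = mat 1" and "matrix_inv H ** H = mat 1"
proof -
  have "x = 0" if "H *v x = 0" for x :: "complex^'i"
  proof -
    have "matvec H (($) x) = (\<lambda>_. 0)"
      using that unfolding matvec_def by (auto simp: matrix_vector_mult_def vec_eq_iff)
    then have "qform H (($) x) = 0"
      unfolding qform_eq_sesq sesq_def by simp
    then have "($) x = (\<lambda>_. 0)"
      using assms unfolding pd_def by force
    then show "x = 0" by (simp add: vec_eq_iff fun_eq_iff)
  qed
  then have "invertible H"
    using matrix_left_invertible_ker invertible_left_inverse by blast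
  then have "H ** matrix_inv H = mat 1 \<and> matrix_inv H ** H = mat 1"
    unfolding invertible_def matrix_inv_def by (rule someI_ex)
  then show "H ** matrix_inv H = mat 1" and "matrix_inv H ** H = mat 1"
    by auto
qed

lemma hermitian_inverse:
  fixes H M :: "complex^('i::finite)^'i"
  assumes "hermitian H" and "M ** H = mat 1"
  shows "hermitian M"
proof -
  define M' where "M' = (\<chi> i j. cnj (M $ j $ i))"
  have "(H ** M') $ i $ j = mat 1 $ i $ j" for i j
  proof -
    have "(H ** M') $ i $ j = cnj ((M ** H) $ j $ i)"
      unfolding M'_def matrix_matrix_mult_def
      by (simp add: hermitian_cnj_entry[OF assms(1)] mult.commute)
    then show ?thesis
      using assms(2) by (simp add: mat_def)
  qed
  then have "H ** M' = mat 1"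
    by (simp add: vec_eq_iff)
  then have "M' = M"
    by (metis assms(2) matrix_mul_assoc matrix_mul_lid matrix_mul_rid)
  then show ?thesis
    unfolding hermitian_def M'_def by (metis complex_cnj_cnj vec_lambda_beta)
qed

lemma psd_diagonal:
  assumes "psd H"
  shows "H $ k $ k = complex_of_real (Re (H $ k $ k))" and "0 \<le> Re (H $ k $ k)"
proof -
  have "cnj (H $ k $ k) = H $ k $ k"
    using assms hermitian_cnj_entry unfolding psd_def by blast
  then show "H $ k $ k = complex_of_real (Re (H $ k $ k))"
    by (simp add: complex_eq_iff)
  show "0 \<le> Re (H $ k $ k)"
    using assms unfolding psd_def qform_eq_sesq by (metis sesq_std_basis)
qed

lemma psd_zero_diagonal_row:
  fixes H :: "complex^('i::finite)^'i"
  assumes "psd H" and "H $ k $ k = 0"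
  shows "H $ k $ j = 0"
proof (rule ccontr)
  define c where "c = H $ k $ j"
  assume "H $ k $ j \<noteq> 0"
  then have "c \<noteq> 0" unfolding c_def .
  have h: "hermitian H" and nonneg: "\<forall>x. 0 \<le> Re (qform H x)"
    using assms(1) unfolding psd_def by auto
  \<comment> \<open>move from \<open>e\<^sub>j\<close> in the direction \<open>-e\<^sub>k\<close> far enough to make the form negative\<close>
  define s where "s = (Re (H $ j $ j) + 1) / (2 * (cmod c)\<^sup>2)"
  define t where "t = - (complex_of_real s * c)"
  define x where "x = (\<lambda>i. std_basis j i + t * std_basis k i)"
  have "H $ j $ k = cnj c"
    using hermitian_cnj_entry[OF h, of k j] unfolding c_def by simp
  then have "qform H x = H $ j $ j + t * cnj c + cnj t * c + cnj t * t * H $ k $ k"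
    unfolding qform_eq_sesq x_def sesq_add_left sesq_add_right sesq_scale_left sesq_scale_right
      sesq_std_basis
    by (simp add: c_def algebra_simps)
  also have "\<dots> = H $ j $ j - 2 * complex_of_real s * (c * cnj c)"
    unfolding t_def assms(2) by (simp add: algebra_simps)
  finally have "qform H x = H $ j $ j - 2 * complex_of_real s * (c * cnj c)" .
  then have "Re (qform H x) = Re (H $ j $ j) - 2 * s * (cmod c)\<^sup>2"
    by (simp add: complex_norm_square[symmetric])
  also have "\<dots> = -1"
    unfolding s_def using \<open>c \<noteq> 0\<close> by (simp add: field_simps)
  finally show False
    using nonneg by (metis neg_0_le_iff_le not_one_le_zero)
qed

text \<open>If \<open>H $ k $ k = 0\<close>, division by zero makes the Schur complement \<open>H\<close> itself; this is
  why the lemmas below need no hypothesis on the pivot.\<close>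

definition schur_complement :: "complex^('i::finite)^'i \<Rightarrow> 'i \<Rightarrow> complex^'i^'i" where
  "schur_complement H k = (\<chi> i j. H $ i $ j - H $ i $ k * H $ k $ j / H $ k $ k)"

lemma schur_complement_zero_row:
  assumes "psd H"
  shows "schur_complement H k $ k $ j = 0"
  using psd_zero_diagonal_row[OF assms] unfolding schur_complement_def by (cases "H $ k $ k = 0") auto

lemma psd_schur_complement:
  fixes H :: "complex^('i::finite)^'i"
  assumes "psd H"
  shows "psd (schur_complement H k)"
proof (cases "H $ k $ k = 0")
  case True
  then show ?thesis using assms unfolding schur_complement_def by simp
next
  case False
  define d where "d = H $ k $ k"
  have h: "hermitian H" and nonneg: "\<forall>x. 0 \<le> Re (qform H x)"
    using assms unfolding psd_def by auto
  have dd: "cnj d = d"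
    using hermitian_cnj_entry[OF h, of k k] unfolding d_def .
  have "d \<noteq> 0"
    using False unfolding d_def .
  have "hermitian (schur_complement H k)"
    by (rule hermitianI) (simp add: schur_complement_def hermitian_cnj_entry[OF h] mult.commute)
  moreover have "0 \<le> Re (qform (schur_complement H k) x)" for x
  proof -
    define \<beta> where "\<beta> = matvec H x k"
    have left: "sesq H x (std_basis k) = cnj \<beta>"
      using sesq_hermitian_swap[OF h, of x "std_basis k"] unfolding sesq_std_basis_left \<beta>_def by simp
    \<comment> \<open>completing the square: the Schur complement form is the form of \<open>H\<close> at \<open>x - (\<beta>/d) e\<^sub>k\<close>\<close>
    have "qform (schur_complement H k) x = qform H x - cnj \<beta> * \<beta> / d"
    proof -
      have "schur_complement H k = (\<chi> i j. H $ i $ j - H $ i $ k * (H $ k $ j / d))"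
        unfolding schur_complement_def d_def by simp
      moreover have "(\<Sum>i\<in>UNIV. cnj (x i) * H $ i $ k) = cnj \<beta>"
        using left unfolding sesq_def matvec_std_basis .
      moreover have "(\<Sum>j\<in>UNIV. H $ k $ j / d * x j) = \<beta> / d"
        unfolding \<beta>_def matvec_def by (simp add: sum_divide_distrib)
      ultimately show ?thesis
        unfolding qform_eq_sesq by (simp only: sesq_rank_one_diff) simp
    qed
    also have "\<dots> = qform H (\<lambda>i. x i - \<beta> / d * std_basis k i)"
    proof -
      have "sesq H (std_basis k) x = \<beta>"
        unfolding sesq_std_basis_left \<beta>_def ..
      then show ?thesis
        unfolding qform_eq_sesq sesq_diff_left sesq_diff_right sesq_scale_left sesq_scale_right
          left sesq_std_basis d_def[symmetric]
        using \<open>d \<noteq> 0\<close> dd by (simp add: field_simps)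
    qed
    finally show ?thesis using nonneg by simp
  qed
  ultimately show ?thesis unfolding psd_def by blast
qed

lemma schur_complement_split:
  fixes H :: "complex^('i::finite)^'i"
  assumes "psd H"
  obtains g where "\<And>i j. H $ i $ j = schur_complement H k $ i $ j + g i * cnj (g j)"
proof
  define r where "r = Re (H $ k $ k)"
  have d: "H $ k $ k = complex_of_real r" and "0 \<le> r"
    using psd_diagonal[OF assms] unfolding r_def by auto
  have h: "hermitian H"
    using assms unfolding psd_def by auto
  have q: "H $ k $ k = complex_of_real (sqrt r) * complex_of_real (sqrt r)"
    unfolding d of_real_mult[symmetric] using \<open>0 \<le> r\<close> by simp
  fix i j
  have cnj_col: "cnj (H $ j $ k / complex_of_real (sqrt r)) = H $ k $ j / complex_of_real (sqrt r)"
    using hermitian_cnj_entry[OF h, of j k] by simp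
  show "H $ i $ j = schur_complement H k $ i $ j
          + H $ i $ k / complex_of_real (sqrt r) * cnj (H $ j $ k / complex_of_real (sqrt r))"
    unfolding cnj_col schur_complement_def q by simp
qed

lemma psd_gram_decomposition_on:
  fixes H :: "complex^('i::finite)^'i"
  assumes "finite S" and "psd H" and "\<And>i j. i \<notin> S \<Longrightarrow> H $ i $ j = 0"
  shows "\<exists>(n::nat) g. \<forall>i j. H $ i $ j = (\<Sum>k<n. g k i * cnj (g k j))"
  using assms
proof (induction S arbitrary: H rule: finite_induct)
  case empty
  then show ?case by (intro exI[of _ 0]) simp
next
  case (insert k S H)
  have "schur_complement H k $ i $ j = 0" if "i \<notin> S" for i j
    using insert.prems that schur_complement_zero_row[of H k]
    by (cases "i = k") (auto simp: schur_complement_def)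
  then obtain n :: nat and g
    where g: "\<forall>i j. schur_complement H k $ i $ j = (\<Sum>l<n. g l i * cnj (g l j))"
    using insert.IH psd_schur_complement[OF insert.prems(1)] by blast
  obtain g0 where g0: "\<And>i j. H $ i $ j = schur_complement H k $ i $ j + g0 i * cnj (g0 j)"
    using schur_complement_split[OF insert.prems(1)] by blast
  have "H $ i $ j = (\<Sum>l<Suc n. (g(n := g0)) l i * cnj ((g(n := g0)) l j))" for i j
    using g by (simp add: g0)
  then show ?case by blast
qed

lemma psd_gram_decomposition:
  fixes H :: "complex^('i::finite)^'i"
  assumes "psd H"
  obtains n :: nat and g where "\<And>i j. H $ i $ j = (\<Sum>k<n. g k i * cnj (g k j))"
  using psd_gram_decomposition_on[of UNIV H] assms that by auto

lemma sum_UNIV_prod: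
  "(\<Sum>p\<in>(UNIV::('a::finite \<times> 'b::finite) set). f p) = (\<Sum>a\<in>UNIV. \<Sum>b\<in>UNIV. f (a, b))"
  by (simp add: sum.cartesian_product flip: UNIV_Times_UNIV)

lemma hermitian_ptrace1: "hermitian M \<Longrightarrow> hermitian (ptrace1 M)"
  by (rule hermitianI) (simp add: ptrace1_def cnj_sum hermitian_cnj_entry)

lemma hermitian_ptrace2: "hermitian M \<Longrightarrow> hermitian (ptrace2 M)"
  by (rule hermitianI) (simp add: ptrace2_def cnj_sum hermitian_cnj_entry)

lemma qform_ptrace2:
  fixes \<rho> :: "complex^('a::finite \<times> 'b::finite)^('a \<times> 'b)"
  shows "qform (ptrace2 \<rho>) y = (\<Sum>b\<in>UNIV. qform \<rho> (\<lambda>p. if snd p = b then y (fst p) else 0))"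
proof -
  define t where "t = (\<lambda>b (p::'a \<times> 'b). if snd p = b then y (fst p) else 0)"
  have "matvec \<rho> (t b) p = (\<Sum>a'\<in>UNIV. \<rho> $ p $ (a', b) * y a')" for b p
  proof -
    have "matvec \<rho> (t b) p = (\<Sum>a'\<in>UNIV. \<Sum>b'\<in>UNIV. if b' = b then \<rho> $ p $ (a', b') * y a' else 0)"
      unfolding matvec_def sum_UNIV_prod t_def by (intro sum.cong) auto
    then show ?thesis by simp
  qed
  moreover have "qform \<rho> (t b) = (\<Sum>a\<in>UNIV. \<Sum>b'\<in>UNIV. if b' = b then cnj (y a) * matvec \<rho> (t b) (a, b') else 0)"
    for b
    unfolding qform_eq_sesq sesq_def sum_UNIV_prod t_def by (intro sum.cong) auto
  ultimately have "qform \<rho> (t b) = (\<Sum>a\<in>UNIV. \<Sum>a'\<in>UNIV. cnj (y a) * (\<rho> $ (a, b) $ (a', b) * y a'))" for b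
    by (simp add: sum_distrib_left)
  then have "(\<Sum>b\<in>UNIV. qform \<rho> (t b)) = (\<Sum>a\<in>UNIV. \<Sum>a'\<in>UNIV. \<Sum>b\<in>UNIV. cnj (y a) * (\<rho> $ (a, b) $ (a', b) * y a'))"
    by (simp add: sum.swap[of _ "UNIV :: 'b set"])
  also have "\<dots> = qform (ptrace2 \<rho>) y"
    unfolding qform_def ptrace2_def by (simp add: sum_distrib_left sum_distrib_right mult.assoc)
  finally show ?thesis unfolding t_def ..
qed

lemma pd_ptrace2:
  fixes \<rho> :: "complex^('a::finite \<times> 'b::finite)^('a \<times> 'b)"
  assumes "pd \<rho>"
  shows "pd (ptrace2 \<rho>)"
  unfolding pd_def
proof (intro conjI allI impI)
  show "hermitian (ptrace2 \<rho>)"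
    using assms hermitian_ptrace2 unfolding pd_def by blast
  fix y :: "'a \<Rightarrow> complex"
  assume "y \<noteq> (\<lambda>_. 0)"
  then obtain a0 where "y a0 \<noteq> 0" by auto
  have "0 < Re (qform \<rho> (\<lambda>p. if snd p = b then y (fst p) else 0))" for b
  proof -
    have "(\<lambda>p. if snd p = b then y (fst p) else 0) \<noteq> (\<lambda>_. 0)"
      using \<open>y a0 \<noteq> 0\<close> by (metis fst_conv snd_conv)
    then show ?thesis
      using assms unfolding pd_def by blast
  qed
  then show "0 < Re (qform (ptrace2 \<rho>) y)"
    unfolding qform_ptrace2 Re_sum by (intro sum_pos) auto
qed

text \<open>The case of a rank-one \<open>\<sigma>\<^sub>B\<^sub>C\<close>, with \<open>P = \<rho>\<^sub>A\<^sup>-\<^sup>1\<close> and \<open>M = \<rho>\<^sub>A\<^sub>B\<^sup>-\<^sup>1\<close>.\<close>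

lemma qform_inverse_ptrace2_le:
  fixes \<rho> :: "complex^('a::finite \<times> 'b::finite)^('a \<times> 'b)" and P :: "complex^'a^'a"
    and M :: "complex^('a \<times> 'b)^('a \<times> 'b)" and w :: "'b \<Rightarrow> 'a \<times> 'b \<Rightarrow> complex"
  assumes "psd \<rho>" and P: "ptrace2 \<rho> ** P = mat 1" and M: "\<rho> ** M = mat 1"
  shows "Re (qform P (\<lambda>a. \<Sum>\<beta>\<in>UNIV. w \<beta> (a, \<beta>))) \<le> (\<Sum>\<beta>\<in>UNIV. Re (qform M (w \<beta>)))"
proof -
  have h: "hermitian \<rho>"
    using assms(1) unfolding psd_def by blast
  have hA: "hermitian (ptrace2 \<rho>)"
    using hermitian_ptrace2[OF h] .
  define u where "u = (\<lambda>a. \<Sum>\<beta>\<in>UNIV. w \<beta> (a, \<beta>))"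
  define y where "y = matvec P u"
  define m where "m = (\<lambda>\<beta>. matvec M (w \<beta>))"
  define t where "t = (\<lambda>\<beta> (p::'a \<times> 'b). if snd p = \<beta> then y (fst p) else 0)"
  have u: "matvec (ptrace2 \<rho>) y = u"
    unfolding y_def using P by (simp add: matvec_mult[symmetric] matvec_mat_1)
  have w: "matvec \<rho> (m \<beta>) = w \<beta>" for \<beta>
    unfolding m_def using M by (simp add: matvec_mult[symmetric] matvec_mat_1)
  have diag: "(\<Sum>\<beta>\<in>UNIV. qform \<rho> (t \<beta>)) = qform (ptrace2 \<rho>) y"
    unfolding t_def qform_ptrace2 ..
  have "sesq \<rho> (t \<beta>) (m \<beta>) = (\<Sum>a\<in>UNIV. \<Sum>b\<in>UNIV. if b = \<beta> then cnj (y a) * w \<beta> (a, b) else 0)" for \<beta>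
    unfolding sesq_def w sum_UNIV_prod t_def by (intro sum.cong) auto
  then have "(\<Sum>\<beta>\<in>UNIV. sesq \<rho> (t \<beta>) (m \<beta>)) = (\<Sum>a\<in>UNIV. cnj (y a) * u a)"
    unfolding u_def by (simp add: sum_distrib_left sum.swap[of _ "UNIV :: 'b set"])
  then have cross: "(\<Sum>\<beta>\<in>UNIV. sesq \<rho> (t \<beta>) (m \<beta>)) = qform (ptrace2 \<rho>) y"
    unfolding qform_eq_sesq sesq_def u .
  have "(\<Sum>\<beta>\<in>UNIV. 2 * Re (sesq \<rho> (t \<beta>) (m \<beta>)))
      \<le> (\<Sum>\<beta>\<in>UNIV. Re (qform \<rho> (t \<beta>)) + Re (qform \<rho> (m \<beta>)))"
    by (intro sum_mono psd_sesq_Re_le assms(1))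
  then have "2 * Re (qform (ptrace2 \<rho>) y) \<le> Re (qform (ptrace2 \<rho>) y) + (\<Sum>\<beta>\<in>UNIV. Re (qform \<rho> (m \<beta>)))"
    unfolding sum.distrib sum_distrib_left[symmetric] Re_sum[symmetric] diag cross .
  moreover have "qform P u = qform (ptrace2 \<rho>) y"
    unfolding y_def by (rule qform_right_inverse[OF hA P])
  moreover have "qform M (w \<beta>) = qform \<rho> (m \<beta>)" for \<beta>
    unfolding m_def by (rule qform_right_inverse[OF h M])
  ultimately show ?thesis
    unfolding u_def[symmetric] by (simp add: Re_sum)
qed

lemma qform_kron:
  fixes P :: "complex^('a::finite)^'a" and \<sigma> :: "complex^('q::finite)^'q"
  shows "qform (kron P \<sigma>) v = (\<Sum>q\<in>UNIV. \<Sum>q'\<in>UNIV. \<sigma> $ q $ q' * sesq P (\<lambda>a. v (a, q)) (\<lambda>a. v (a, q')))"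
proof -
  have "qform (kron P \<sigma>) v = (\<Sum>a\<in>UNIV. \<Sum>q\<in>UNIV. \<Sum>a'\<in>UNIV. \<Sum>q'\<in>UNIV.
      cnj (v (a, q)) * (P $ a $ a' * \<sigma> $ q $ q') * v (a', q'))"
    unfolding qform_def kron_def sum_UNIV_prod by simp
  also have "\<dots> = (\<Sum>a\<in>UNIV. \<Sum>q\<in>UNIV. \<Sum>q'\<in>UNIV. \<Sum>a'\<in>UNIV.
      cnj (v (a, q)) * (P $ a $ a' * \<sigma> $ q $ q') * v (a', q'))"
    by (intro sum.cong refl, rule sum.swap)
  also have "\<dots> = (\<Sum>q\<in>UNIV. \<Sum>q'\<in>UNIV. \<Sum>a\<in>UNIV. \<Sum>a'\<in>UNIV.
      cnj (v (a, q)) * (P $ a $ a' * \<sigma> $ q $ q') * v (a', q'))"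
    by (subst sum.swap) (intro sum.cong refl, rule sum.swap)
  also have "\<dots> = (\<Sum>q\<in>UNIV. \<Sum>q'\<in>UNIV. \<sigma> $ q $ q' * sesq P (\<lambda>a. v (a, q)) (\<lambda>a. v (a, q')))"
    unfolding sesq_def matvec_def by (simp add: sum_distrib_left mult_ac)
  finally show ?thesis .
qed

lemma qform_sum_scaled:
  "qform P (\<lambda>a. \<Sum>q\<in>UNIV. cnj (h q) * f q a) = (\<Sum>q\<in>UNIV. \<Sum>q'\<in>UNIV. h q * cnj (h q') * sesq P (f q) (f q'))"
  unfolding qform_eq_sesq sesq_sum_left sesq_sum_right sesq_scale_left sesq_scale_right
  by (simp add: sum_distrib_left mult_ac)

lemma qform_kron_gram:
  fixes P :: "complex^('a::finite)^'a" and \<sigma> :: "complex^('q::finite)^'q"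
  assumes "\<And>i j. \<sigma> $ i $ j = (\<Sum>k\<in>K. g k i * cnj (g k j))"
  shows "qform (kron P \<sigma>) v = (\<Sum>k\<in>K. qform P (\<lambda>a. \<Sum>q\<in>UNIV. cnj (g k q) * v (a, q)))"
proof -
  have "qform (kron P \<sigma>) v = (\<Sum>q\<in>UNIV. \<Sum>q'\<in>UNIV. \<Sum>k\<in>K.
      g k q * cnj (g k q') * sesq P (\<lambda>a. v (a, q)) (\<lambda>a. v (a, q')))"
    unfolding qform_kron assms by (simp add: sum_distrib_right)
  also have "\<dots> = (\<Sum>k\<in>K. \<Sum>q\<in>UNIV. \<Sum>q'\<in>UNIV.
      g k q * cnj (g k q') * sesq P (\<lambda>a. v (a, q)) (\<lambda>a. v (a, q')))"
    by (subst sum.swap) (intro sum.cong refl, rule sum.swap)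
  also have "\<dots> = (\<Sum>k\<in>K. qform P (\<lambda>a. \<Sum>q\<in>UNIV. cnj (g k q) * v (a, q)))"
    using qform_sum_scaled[of P "g _" "\<lambda>q a. v (a, q)"] by simp
  finally show ?thesis .
qed

lemma ptrace1_gram:
  fixes \<sigma> :: "complex^('b::finite \<times> 'c::finite)^('b \<times> 'c)"
  assumes "\<And>i j. \<sigma> $ i $ j = (\<Sum>k\<in>K. g k i * cnj (g k j))"
  shows "ptrace1 \<sigma> $ c $ c' = (\<Sum>k\<in>K \<times> UNIV. g (fst k) (snd k, c) * cnj (g (fst k) (snd k, c')))"
  unfolding ptrace1_def assms
  by (simp add: sum.cartesian_product' sum_distrib_right sum.swap[of _ K])

lemma qform_reassoc:
  "qform (reassoc X) v = qform X (\<lambda>p. v (fst (fst p), snd (fst p), snd p))"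
  unfolding qform_def reassoc_def by (simp add: sum_UNIV_prod)

lemma hermitian_kron: "hermitian X \<Longrightarrow> hermitian Y \<Longrightarrow> hermitian (kron X Y)"
  by (rule hermitianI) (simp add: kron_def hermitian_cnj_entry)

lemma hermitian_reassoc: "hermitian X \<Longrightarrow> hermitian (reassoc X)"
  by (rule hermitianI) (simp add: reassoc_def hermitian_cnj_entry)

lemma hermitian_diff: "hermitian X \<Longrightarrow> hermitian Y \<Longrightarrow> hermitian (X - Y)"
  by (rule hermitianI) (simp add: hermitian_cnj_entry)

lemma loewner_le_kron_ptrace:
  fixes \<rho> :: "complex^('a::finite \<times> 'b::finite)^('a \<times> 'b)"
    and \<sigma> :: "complex^('b \<times> 'c::finite)^('b \<times> 'c)"
  assumes "psd \<rho>" and "psd \<sigma>"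
    and P: "ptrace2 \<rho> ** P = mat 1" "hermitian P" and M: "\<rho> ** M = mat 1" "hermitian M"
  shows "loewner_le (kron P \<sigma>) (reassoc (kron M (ptrace1 \<sigma>)))"
proof -
  obtain n :: nat and g where g: "\<And>i j. \<sigma> $ i $ j = (\<Sum>k<n. g k i * cnj (g k j))"
    using psd_gram_decomposition[OF assms(2)] by blast
  have "hermitian \<sigma>"
    using assms(2) unfolding psd_def by blast
  have "Re (qform (kron P \<sigma>) v) \<le> Re (qform (reassoc (kron M (ptrace1 \<sigma>))) v)" for v
  proof -
    define w where "w k \<beta> p = (\<Sum>c\<in>UNIV. cnj (g k (\<beta>, c)) * v (fst p, snd p, c))" for k \<beta> p
    have "qform (kron P \<sigma>) v = (\<Sum>k<n. qform P (\<lambda>a. \<Sum>\<beta>\<in>UNIV. w k \<beta> (a, \<beta>)))"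
      unfolding qform_kron_gram[OF g] w_def sum_UNIV_prod by simp
    moreover have "qform (reassoc (kron M (ptrace1 \<sigma>))) v = (\<Sum>k<n. \<Sum>\<beta>\<in>UNIV. qform M (w k \<beta>))"
      unfolding qform_reassoc qform_kron_gram[OF ptrace1_gram[OF g]] w_def
      by (simp add: sum.cartesian_product')
    moreover have "Re (qform P (\<lambda>a. \<Sum>\<beta>\<in>UNIV. w k \<beta> (a, \<beta>))) \<le> (\<Sum>\<beta>\<in>UNIV. Re (qform M (w k \<beta>)))" for k
      using qform_inverse_ptrace2_le[OF assms(1) P(1) M(1)] .
    ultimately show ?thesis
      by (simp add: Re_sum sum_mono)
  qed
  moreover have "hermitian (reassoc (kron M (ptrace1 \<sigma>)) - kron P \<sigma>)"
    using \<open>hermitian \<sigma>\<close> P(2) M(2)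
    by (intro hermitian_diff hermitian_reassoc hermitian_kron hermitian_ptrace1)
  ultimately show ?thesis
    unfolding loewner_le_def psd_def qform_diff by simp
qed

theorem lemma1:
  fixes \<rho>AB :: "complex^('a::finite \<times> 'b::finite)^('a \<times> 'b)"
    and \<sigma>BC :: "complex^('b \<times> 'c::finite)^('b \<times> 'c)"
  assumes "density \<rho>AB" and "pd \<rho>AB"
    and "density \<sigma>BC" and "pd \<sigma>BC"
  shows "loewner_le (kron (matrix_inv (ptrace2 \<rho>AB)) \<sigma>BC)
                    (reassoc (kron (matrix_inv \<rho>AB) (ptrace1 \<sigma>BC)))"
proof (rule loewner_le_kron_ptrace)
  show "psd \<rho>AB" and "psd \<sigma>BC"
    using assms(1,3) unfolding density_def by auto
  have "pd (ptrace2 \<rho>AB)"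
    using pd_ptrace2[OF assms(2)] .
  then show "ptrace2 \<rho>AB ** matrix_inv (ptrace2 \<rho>AB) = mat 1"
    and "hermitian (matrix_inv (ptrace2 \<rho>AB))"
    using pd_matrix_inv hermitian_inverse unfolding pd_def by blast+
  show "\<rho>AB ** matrix_inv \<rho>AB = mat 1" and "hermitian (matrix_inv \<rho>AB)"
    using assms(2) pd_matrix_inv hermitian_inverse unfolding pd_def by blast+
qed

end
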